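(* Let $G=(V,\mathcal{E})$ be the labeled graph associated with a tensor product (either the externally labeled graph $G^E(\pi)$ or the skeleton $G(\pi)$), and for an ordered partition $\Pi$ of $V$ let $\mathcal{E}(\pi,\Pi)=\{\theta(p(i,\Pi),p(j,\Pi)) : \theta(i,j)\in\mathcal{E}\}$. If $\Pi_1\prec\Pi_2$ are ordered partitions of $V$, then $\mathcal{E}(\pi,\Pi_1)>\mathcal{E}(\pi,\Pi_2)$.
   Context: Setting: a tensor product with factor set $S$ and slot set $\Omega$ is encoded by a coloring $\pi$ of $\Omega$ by index symbols (external symbols used once, internal symbols exactly twice, each symbol having a type). Its graph has vertex set $V=\Omega\cup\{0\}$ ($0$ an auxiliary vertex, omitted if there are no external indices) and labeled edges: $\{0,j\}$ for every slot $j$ carrying an external index, and $\{i,j\}$ for every pair of slots $i\ne j$ carrying the same internal index; a labeled edge $\theta(u,v)$ is the unordered pair $\{u,v\}$ with a label $\mathrm{type}[\mathrm{index}]$ (in $G^E(\pi)$ external edges carry the specific external symbol and internal edges a generic index; in $G(\pi)$ all edges carry a generic index). An ordered partition of $V$ is a sequence $\Pi=(\Pi_1,\dots,\Pi_r)$ of nonempty pairwise disjoint cells with union $V$. $\Pi\preceq\Pi'$ ($\Pi$ finer than $\Pi'$) if every cell of $\Pi'$ is a union of consecutive cells of $\Pi$; $\Pi\prec\Pi'$ means $\Pi\preceq\Pi'$ and $\Pi\neq\Pi'$. The position of $v\in\Pi_k$ is $p(v,\Pi)=1+\sum_{i=1}^{k-1}|\Pi_i|$. Labeled edge sets are compared lexicographically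 as sorted lists (with multiplicity) of labeled edges, each labeled edge $\theta(u,v)$ being compared lexicographically by its vertex pair (written with the smaller vertex first) and then by its label under a fixed total order of labels. *)

theory Defs
  imports Main "HOL-Library.Multiset" "HOL-Library.List_Lexorder" "HOL-Library.Product_Lexorder"
begin

text \<open>A tensor product: slot set Omega, coloring pi of slots by index symbols,
  set Ext of external symbols (all other symbols are internal), and a type for every symbol.\<close>

definition tensor_product :: "'s set \<Rightarrow> ('s \<Rightarrow> 'i) \<Rightarrow> 'i set \<Rightarrow> bool" where
  "tensor_product Omega \<pi> Ext \<longleftrightarrow> finite Omega \<and>
     (\<forall>j\<in>Omega. card {k\<in>Omega. \<pi> k = \<pi> j} = (if \<pi> j \<in> Ext then 1 else 2))"

text \<open>Vertices: slots (Some j) plus the auxiliary vertex 0 (None), present iff there is an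
  external index.\<close>

definition graph_vertices :: "'s set \<Rightarrow> ('s \<Rightarrow> 'i) \<Rightarrow> 'i set \<Rightarrow> 's option set" where
  "graph_vertices Omega \<pi> Ext =
     Some ` Omega \<union> (if \<exists>j\<in>Omega. \<pi> j \<in> Ext then {None} else {})"

text \<open>The label of an edge is type[index],
  encoded injectively by lbl (type, Some symbol) for a specific symbol and
  lbl (type, None) for a generic index.  If specific is True this is the externally
  labeled graph G^E(pi), otherwise the skeleton G(pi).\<close>

definition graph_edges ::
  "bool \<Rightarrow> ('t \<Rightarrow> 'i option \<Rightarrow> 'l) \<Rightarrow> ('i \<Rightarrow> 't) \<Rightarrow> 's set \<Rightarrow> ('s \<Rightarrow> 'i) \<Rightarrow> 'i set
     \<Rightarrow> ('s option set \<times> 'l) set" where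
  "graph_edges specific lbl ty Omega \<pi> Ext =
     {({None, Some j}, lbl (ty (\<pi> j)) (if specific then Some (\<pi> j) else None)) | j.
        j \<in> Omega \<and> \<pi> j \<in> Ext}
   \<union> {({Some i, Some j}, lbl (ty (\<pi> i)) None) | i j.
        i \<in> Omega \<and> j \<in> Omega \<and> i \<noteq> j \<and> \<pi> i = \<pi> j \<and> \<pi> i \<notin> Ext}"

definition ordered_partition :: "'v set \<Rightarrow> 'v set list \<Rightarrow> bool" where
  "ordered_partition V P \<longleftrightarrow>
     (\<forall>C\<in>set P. C \<noteq> {}) \<and>
     (\<forall>i<length P. \<forall>j<length P. i \<noteq> j \<longrightarrow> P ! i \<inter> P ! j = {}) \<and>
     \<Union> (set P) = V"

definition finer :: "'v set list \<Rightarrow> 'v set list \<Rightarrow> bool" where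
  "finer P P' \<longleftrightarrow> (\<exists>qs. concat qs = P \<and> list_all2 (\<lambda>q C. q \<noteq> [] \<and> \<Union> (set q) = C) qs P')"

definition strictly_finer :: "'v set list \<Rightarrow> 'v set list \<Rightarrow> bool" where
  "strictly_finer P P' \<longleftrightarrow> finer P P' \<and> P \<noteq> P'"

definition pos :: "'v \<Rightarrow> 'v set list \<Rightarrow> nat" where
  "pos v P = 1 + (\<Sum>i < (THE k. k < length P \<and> v \<in> P ! k). card (P ! i))"

text \<open>E(pi,P): labeled edges with endpoints replaced by positions, written with the smaller
  position first; a multiset (positions may coincide), compared as sorted lists,
  lexicographically (vertex pair first, then label).\<close>

definition relabeled_edges :: "('v set \<times> 'l) set \<Rightarrow> 'v set list \<Rightarrow> ((nat \<times> nat) \<times> 'l::linorder) list" where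
  "relabeled_edges E P =
     sorted_list_of_multiset
       (image_mset (\<lambda>(e, l). ((Min ((\<lambda>v. pos v P) ` e), Max ((\<lambda>v. pos v P) ` e)), l))
         (mset_set E))"

end

theory Submission
  imports Defs
begin

text \<open>Passing to a finer ordered partition can only increase the position of a vertex, since
  the position is one more than the number of vertices in strictly earlier cells. A strict
  refinement splits some cell, so every vertex in a later piece of it moves strictly forward.
  Hence every relabeled edge weakly increases and an edge at such a vertex (every vertex lies
  on an edge, as internal indices occur twice) strictly increases; a pointwise domination
  with one strict entry makes the sorted list lexicographically larger.\<close>

lemma list_all2_le_insort:
  fixes a b :: "'a::linorder"
  assumes "list_all2 (\<le>) xs ys" "sorted xs" "sorted ys" "a \<le> b"
  shows "list_all2 (\<le>) (insort a xs) (insort b ys)"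
  using assms
proof (induction xs ys arbitrary: a b rule: list_all2_induct)
  case (Cons x xs y ys)
  have "insort x xs = x # xs" "insort y ys = y # ys"
    using Cons.prems by (simp_all add: insort_is_Cons)
  then show ?case
    using Cons Cons.IH[of x b] Cons.IH[of a y] by auto
qed simp

lemma list_all2_le_sort:
  "list_all2 (\<le>) xs (ys::'a::linorder list) \<Longrightarrow> list_all2 (\<le>) (sort xs) (sort ys)"
  by (induction xs ys rule: list_all2_induct) (auto intro: list_all2_le_insort)

lemma list_all2_le_imp_less:
  "list_all2 (\<le>) xs (ys::'a::linorder list) \<Longrightarrow> xs \<noteq> ys \<Longrightarrow> xs < ys"
  by (induction xs ys rule: list_all2_induct) (auto simp: le_less)

lemma length_filter_mono_less:
  assumes "\<And>x. x \<in> set xs \<Longrightarrow> Q x \<Longrightarrow> P x" "x \<in> set xs" "P x" "\<not> Q x"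
  shows "length (filter Q xs) < length (filter P xs)"
proof -
  have "filter Q xs = filter Q (filter P xs)"
    using assms(1) by (auto intro: filter_cong)
  also have "length \<dots> < length (filter P xs)"
    using assms(2-4) by (intro length_filter_less) auto
  finally show ?thesis .
qed

lemma sorted_list_of_multiset_image_less:
  fixes f g :: "'b \<Rightarrow> 'a::linorder"
  assumes "finite E" and le: "\<And>x. x \<in> E \<Longrightarrow> f x \<le> g x" and "x\<^sub>0 \<in> E" "f x\<^sub>0 < g x\<^sub>0"
  shows "sorted_list_of_multiset (image_mset f (mset_set E))
       < sorted_list_of_multiset (image_mset g (mset_set E))"
proof -
  obtain xs where xs: "set xs = E" "distinct xs"
    using \<open>finite E\<close> finite_distinct_list by blast
  then have E: "mset_set E = mset xs"
    using mset_set_set by blast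
  have pointwise: "list_all2 (\<le>) (map f xs) (map g xs)"
    using le xs(1) by (auto simp: list_all2_conv_all_nth)
  \<comment> \<open>counting the values \<open>\<ge> g x\<^sub>0\<close> tells the two multisets apart\<close>
  have count: "size (filter_mset (\<lambda>y. g x\<^sub>0 \<le> y) (mset (map h xs)))
      = length (filter (\<lambda>x. g x\<^sub>0 \<le> h x) xs)" for h :: "'b \<Rightarrow> 'a"
    by (induction xs) auto
  have "length (filter (\<lambda>x. g x\<^sub>0 \<le> f x) xs) < length (filter (\<lambda>x. g x\<^sub>0 \<le> g x) xs)"
    using assms xs(1) by (intro length_filter_mono_less[where x = x\<^sub>0]) (auto intro: order_trans)
  then have "mset (map f xs) \<noteq> mset (map g xs)"
    using count[of f] count[of g] by auto
  then have "sort (map f xs) \<noteq> sort (map g xs)"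
    by (metis mset_sort)
  then have "sort (map f xs) < sort (map g xs)"
    using pointwise by (intro list_all2_le_imp_less list_all2_le_sort)
  then show ?thesis
    by (simp add: E flip: mset_map)
qed

definition preceding :: "'v set list \<Rightarrow> 'v \<Rightarrow> 'v set" where
  "preceding P v = {u. \<exists>ys zs. P = ys @ zs \<and> u \<in> \<Union> (set ys) \<and> v \<in> \<Union> (set zs)}"

lemma precedingI: "P = ys @ zs \<Longrightarrow> u \<in> \<Union> (set ys) \<Longrightarrow> v \<in> \<Union> (set zs) \<Longrightarrow> u \<in> preceding P v"
  unfolding preceding_def by blast

lemma preceding_subset: "preceding P v \<subseteq> \<Union> (set P)"
  unfolding preceding_def by auto

lemma ordered_partition_cell_nonempty: "ordered_partition V P \<Longrightarrow> C \<in> set P \<Longrightarrow> C \<noteq> {}"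
  unfolding ordered_partition_def by blast

lemma ordered_partition_Union: "ordered_partition V P \<Longrightarrow> \<Union> (set P) = V"
  unfolding ordered_partition_def by blast

lemma ordered_partition_cell_unique:
  "ordered_partition V P \<Longrightarrow> i < length P \<Longrightarrow> j < length P \<Longrightarrow> x \<in> P ! i \<Longrightarrow> x \<in> P ! j \<Longrightarrow> i = j"
  unfolding ordered_partition_def by blast

lemma preceding_eq_UN_lessThan:
  assumes op: "ordered_partition V P" and k: "k < length P" "v \<in> P ! k"
  shows "preceding P v = (\<Union>i<k. P ! i)"
proof
  show "(\<Union>i<k. P ! i) \<subseteq> preceding P v"
  proof
    fix u assume "u \<in> (\<Union>i<k. P ! i)"
    then obtain i where "i < k" "u \<in> take k P ! i"
      by auto
    then have "u \<in> \<Union> (set (take k P))"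
      using k(1) by (metis UnionI length_take min.absorb4 nth_mem)
    moreover have "v \<in> \<Union> (set (drop k P))"
      using k by (auto simp: Cons_nth_drop_Suc[symmetric])
    ultimately show "u \<in> preceding P v"
      by (intro precedingI[of P "take k P" "drop k P"]) simp_all
  qed
next
  show "preceding P v \<subseteq> (\<Union>i<k. P ! i)"
  proof
    fix u assume "u \<in> preceding P v"
    then obtain ys zs a b where split: "P = ys @ zs"
      and a: "a < length ys" "u \<in> ys ! a" and b: "b < length zs" "v \<in> zs ! b"
      unfolding preceding_def by (auto simp: in_set_conv_nth)
    have "length ys + b = k"
      using ordered_partition_cell_unique[OF op _ k(1) _ k(2), of "length ys + b"] split b by simp
    then show "u \<in> (\<Union>i<k. P ! i)"
      using split a by (auto simp: nth_append)
  qed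
qed

lemma pos_eq_Suc_card_preceding:
  assumes op: "ordered_partition V P" and "finite V" "v \<in> V"
  shows "pos v P = Suc (card (preceding P v))"
proof -
  obtain k where k: "k < length P" "v \<in> P ! k"
    using op \<open>v \<in> V\<close> unfolding ordered_partition_def by (auto simp: in_set_conv_nth)
  have "(THE k. k < length P \<and> v \<in> P ! k) = k"
    using k ordered_partition_cell_unique[OF op _ k(1) _ k(2)] by blast
  moreover have "card (\<Union>i<k. P ! i) = (\<Sum>i<k. card (P ! i))"
  proof (rule card_UN_disjoint)
    show "\<forall>i\<in>{..<k}. finite (P ! i)"
      using op k(1) \<open>finite V\<close> unfolding ordered_partition_def
      by (metis lessThan_iff nth_mem Union_upper order.strict_trans finite_subset)
    show "\<forall>i\<in>{..<k}. \<forall>j\<in>{..<k}. i \<noteq> j \<longrightarrow> P ! i \<inter> P ! j = {}"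
      using op k(1) unfolding ordered_partition_def by auto
  qed simp
  ultimately show ?thesis
    unfolding pos_def preceding_eq_UN_lessThan[OF op k] by simp
qed

lemma Union_concat_blocks:
  "list_all2 (\<lambda>q C. q \<noteq> [] \<and> \<Union> (set q) = C) qs P \<Longrightarrow> \<Union> (set (concat qs)) = \<Union> (set P)"
  by (induction qs P rule: list_all2_induct) auto

lemma concat_singleton_blocks:
  "list_all2 (\<lambda>q C. q \<noteq> [] \<and> \<Union> (set q) = C) qs P \<Longrightarrow> \<forall>q\<in>set qs. length q = 1 \<Longrightarrow> concat qs = P"
  by (induction qs P rule: list_all2_induct) (auto simp: length_Suc_conv)

lemma finer_preceding_subset: "finer P1 P2 \<Longrightarrow> preceding P2 v \<subseteq> preceding P1 v"
proof
  fix u assume "finer P1 P2" and "u \<in> preceding P2 v"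
  then obtain qs ys zs where qs: "concat qs = P1" "list_all2 (\<lambda>q C. q \<noteq> [] \<and> \<Union> (set q) = C) qs (ys @ zs)"
    and uv: "P2 = ys @ zs" "u \<in> \<Union> (set ys)" "v \<in> \<Union> (set zs)"
    unfolding finer_def preceding_def by blast
  then obtain us ws where "P1 = concat us @ concat ws"
    and us: "list_all2 (\<lambda>q C. q \<noteq> [] \<and> \<Union> (set q) = C) us ys"
    and ws: "list_all2 (\<lambda>q C. q \<noteq> [] \<and> \<Union> (set q) = C) ws zs"
    unfolding list_all2_append2 by auto
  moreover have "u \<in> \<Union> (set (concat us))" "v \<in> \<Union> (set (concat ws))"
    using uv(2,3) unfolding Union_concat_blocks[OF us] Union_concat_blocks[OF ws] .
  ultimately show "u \<in> preceding P1 v"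
    by (intro precedingI[of P1 "concat us" "concat ws"])
qed

lemma same_cell_not_preceding:
  assumes op: "ordered_partition V P" and i: "i < length P" "u \<in> P ! i" "v \<in> P ! i"
  shows "u \<notin> preceding P v"
proof
  assume "u \<in> preceding P v"
  then obtain j where "j < i" "u \<in> P ! j"
    unfolding preceding_eq_UN_lessThan[OF op i(1,3)] by blast
  moreover have "j < length P"
    using \<open>j < i\<close> i(1) by linarith
  ultimately show False
    using ordered_partition_cell_unique[OF op _ i(1) _ i(2)] by blast
qed

lemma strictly_finer_separates:
  assumes op1: "ordered_partition V P1" and op2: "ordered_partition V P2"
    and sf: "strictly_finer P1 P2"
  obtains u v where "v \<in> V" "u \<in> preceding P1 v" "u \<notin> preceding P2 v"
proof -
  obtain qs where qs: "concat qs = P1" "list_all2 (\<lambda>q C. q \<noteq> [] \<and> \<Union> (set q) = C) qs P2"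
    using sf unfolding strictly_finer_def finer_def by blast
  obtain q where "q \<in> set qs" "length q \<noteq> 1"
    using concat_singleton_blocks[OF qs(2)] qs(1) sf unfolding strictly_finer_def by blast
  then obtain qs1 qs2 where "qs = qs1 @ q # qs2"
    by (meson split_list)
  then obtain ys C zs where P2: "P2 = ys @ C # zs" and q: "q \<noteq> []" "\<Union> (set q) = C"
    using qs(2) by (auto simp: list_all2_append1 list_all2_Cons1)
  with \<open>length q \<noteq> 1\<close> obtain c1 c2 r where "q = c1 # c2 # r"
    by (cases q; cases "tl q") auto
  with \<open>qs = qs1 @ q # qs2\<close> qs(1) have P1: "P1 = (concat qs1 @ [c1]) @ (c2 # r @ concat qs2)"
    by simp
  then have "c1 \<in> set P1" "c2 \<in> set P1"
    by simp_all
  then obtain u v where "u \<in> c1" "v \<in> c2"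
    using ordered_partition_cell_nonempty[OF op1] by blast
  show thesis
  proof
    show "v \<in> V"
      using ordered_partition_Union[OF op1] \<open>c2 \<in> set P1\<close> \<open>v \<in> c2\<close> by blast
    show "u \<in> preceding P1 v"
      by (rule precedingI[OF P1]) (simp_all add: \<open>u \<in> c1\<close> \<open>v \<in> c2\<close>)
    show "u \<notin> preceding P2 v"
      using \<open>u \<in> c1\<close> \<open>v \<in> c2\<close> \<open>q = c1 # c2 # r\<close> q(2) P2
      by (intro same_cell_not_preceding[OF op2, of "length ys"]) auto
  qed
qed

lemma finite_preceding: "ordered_partition V P \<Longrightarrow> finite V \<Longrightarrow> finite (preceding P v)"
  using preceding_subset ordered_partition_Union finite_subset by metis

lemma finer_pos_le:
  assumes op1: "ordered_partition V P1" and op2: "ordered_partition V P2" and "finite V"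
    and "finer P1 P2" and "v \<in> V"
  shows "pos v P2 \<le> pos v P1"
proof -
  have "card (preceding P2 v) \<le> card (preceding P1 v)"
    using finite_preceding[OF op1 \<open>finite V\<close>] finer_preceding_subset[OF \<open>finer P1 P2\<close>]
    by (rule card_mono)
  then show ?thesis
    using pos_eq_Suc_card_preceding[OF op1] pos_eq_Suc_card_preceding[OF op2] assms(3,5) by simp
qed

lemma strictly_finer_pos_less:
  assumes op1: "ordered_partition V P1" and op2: "ordered_partition V P2" and "finite V"
    and sf: "strictly_finer P1 P2"
  obtains v where "v \<in> V" "pos v P2 < pos v P1"
proof -
  obtain u v where v: "v \<in> V" "u \<in> preceding P1 v" "u \<notin> preceding P2 v"
    using strictly_finer_separates[OF op1 op2 sf] .
  have "preceding P2 v \<subset> preceding P1 v"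
    using finer_preceding_subset[of P1 P2 v] sf v(2,3) unfolding strictly_finer_def by blast
  then have "card (preceding P2 v) < card (preceding P1 v)"
    using finite_preceding[OF op1 \<open>finite V\<close>] by (rule psubset_card_mono[rotated])
  then show thesis
    using that v(1) pos_eq_Suc_card_preceding[OF op1] pos_eq_Suc_card_preceding[OF op2] \<open>finite V\<close>
    by simp
qed

lemma finite_graph_vertices: "tensor_product Omega \<pi> Ext \<Longrightarrow> finite (graph_vertices Omega \<pi> Ext)"
  unfolding tensor_product_def graph_vertices_def by simp

lemma finite_graph_edges:
  assumes "tensor_product Omega \<pi> Ext"
  shows "finite (graph_edges specific lbl ty Omega \<pi> Ext)"
proof -
  have "finite Omega"
    using assms unfolding tensor_product_def by simp
  then have "finite {({Some i, Some j}, lbl (ty (\<pi> i)) None) | i j. i \<in> Omega \<and> j \<in> Omega}"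
    by (intro finite_image_set2) simp_all
  then show ?thesis
    unfolding graph_edges_def using \<open>finite Omega\<close>
    by (auto intro: finite_subset[rotated])
qed

lemma graph_edge_endpoints:
  assumes "x \<in> graph_edges specific lbl ty Omega \<pi> Ext"
  obtains a b l where "x = ({a, b}, l)" "a \<in> graph_vertices Omega \<pi> Ext" "b \<in> graph_vertices Omega \<pi> Ext"
proof -
  have "\<exists>a b l. x = ({a, b}, l) \<and> a \<in> graph_vertices Omega \<pi> Ext \<and> b \<in> graph_vertices Omega \<pi> Ext"
    using assms unfolding graph_edges_def graph_vertices_def by auto
  with that show thesis
    by blast
qed

lemma tensor_product_internal_partner:
  assumes "tensor_product Omega \<pi> Ext" "j \<in> Omega" "\<pi> j \<notin> Ext"
  obtains i where "i \<in> Omega" "i \<noteq> j" "\<pi> i = \<pi> j"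
proof -
  have "card {k \<in> Omega. \<pi> k = \<pi> j} = 2"
    using assms unfolding tensor_product_def by auto
  then have "{k \<in> Omega. \<pi> k = \<pi> j} \<noteq> {j}"
    by auto
  with that \<open>j \<in> Omega\<close> show thesis
    by blast
qed

lemma graph_vertex_incident_edge:
  assumes tp: "tensor_product Omega \<pi> Ext" and v: "v \<in> graph_vertices Omega \<pi> Ext"
  obtains a l where "({v, a}, l) \<in> graph_edges specific lbl ty Omega \<pi> Ext"
proof -
  have external: "({None, Some j}, lbl (ty (\<pi> j)) (if specific then Some (\<pi> j) else None))
      \<in> graph_edges specific lbl ty Omega \<pi> Ext" if "j \<in> Omega" "\<pi> j \<in> Ext" for j
    using that unfolding graph_edges_def by (intro UnI1 CollectI exI[of _ j]) simp
  show thesis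
  proof (cases v)
    case None
    then obtain j where "j \<in> Omega" "\<pi> j \<in> Ext"
      using v unfolding graph_vertices_def by (auto split: if_splits)
    with None external that show thesis
      by blast
  next
    case (Some j)
    then have "j \<in> Omega"
      using v unfolding graph_vertices_def by (auto split: if_splits)
    show thesis
    proof (cases "\<pi> j \<in> Ext")
      case True
      with Some external[OF \<open>j \<in> Omega\<close>] that[of None] show thesis
        by (simp add: insert_commute)
    next
      case False
      then obtain i where "i \<in> Omega" "i \<noteq> j" "\<pi> i = \<pi> j"
        using tensor_product_internal_partner[OF tp \<open>j \<in> Omega\<close>] by blast
      with False \<open>j \<in> Omega\<close> have "({Some j, Some i}, lbl (ty (\<pi> j)) None) \<in> graph_edges specific lbl ty Omega \<pi> Ext"
        unfolding graph_edges_def by (intro UnI2 CollectI exI[of _ j] exI[of _ i]) simp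
      with Some that show thesis
        by blast
    qed
  qed
qed

definition relabel_edge :: "'v set list \<Rightarrow> 'v set \<times> 'l \<Rightarrow> (nat \<times> nat) \<times> 'l" where
  "relabel_edge P = (\<lambda>(e, l). ((Min ((\<lambda>v. pos v P) ` e), Max ((\<lambda>v. pos v P) ` e)), l))"

lemma relabeled_edges_eq:
  "relabeled_edges E P = sorted_list_of_multiset (image_mset (relabel_edge P) (mset_set E))"
  unfolding relabeled_edges_def relabel_edge_def ..

lemma relabel_edge_mono:
  fixes l :: "'l::linorder"
  assumes "pos a P \<le> pos a Q" "pos b P \<le> pos b Q"
  shows "relabel_edge P ({a, b}, l) \<le> relabel_edge Q ({a, b}, l)"
  using assms by (auto simp: relabel_edge_def less_eq_prod_def less_prod_def)

lemma relabel_edge_strict_mono: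
  fixes l :: "'l::linorder"
  assumes "pos a P < pos a Q" "pos b P \<le> pos b Q"
  shows "relabel_edge P ({a, b}, l) < relabel_edge Q ({a, b}, l)"
  using assms by (auto simp: relabel_edge_def less_eq_prod_def less_prod_def)

theorem theorem5:
  fixes Omega :: "'s set" and \<pi> :: "'s \<Rightarrow> 'i" and Ext :: "'i set" and ty :: "'i \<Rightarrow> 't"
    and lbl :: "'t \<Rightarrow> 'i option \<Rightarrow> 'l::linorder" and specific :: bool
    and P1 P2 :: "'s option set list"
  assumes "tensor_product Omega \<pi> Ext"
    and "inj (\<lambda>(t, x). lbl t x)"
    and "ordered_partition (graph_vertices Omega \<pi> Ext) P1"
    and "ordered_partition (graph_vertices Omega \<pi> Ext) P2"
    and "strictly_finer P1 P2"
  shows "relabeled_edges (graph_edges specific lbl ty Omega \<pi> Ext) P1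
       > relabeled_edges (graph_edges specific lbl ty Omega \<pi> Ext) P2"
proof -
  note tp = assms(1) and op1 = assms(3) and op2 = assms(4) and sf = assms(5)
  let ?V = "graph_vertices Omega \<pi> Ext" and ?E = "graph_edges specific lbl ty Omega \<pi> Ext"
  have pos_le: "pos v P2 \<le> pos v P1" if "v \<in> ?V" for v
    using finer_pos_le[OF op1 op2 finite_graph_vertices[OF tp] _ that] sf
    unfolding strictly_finer_def by blast
  obtain v where v: "v \<in> ?V" "pos v P2 < pos v P1"
    using strictly_finer_pos_less[OF op1 op2 finite_graph_vertices[OF tp] sf] .
  obtain a l where edge: "({v, a}, l) \<in> ?E"
    using graph_vertex_incident_edge[OF tp v(1)] .
  then have "a \<in> ?V"
    by (rule graph_edge_endpoints) (auto simp: doubleton_eq_iff)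
  have "relabel_edge P2 x \<le> relabel_edge P1 x" if "x \<in> ?E" for x
    using that by (rule graph_edge_endpoints) (simp add: relabel_edge_mono pos_le)
  moreover have "relabel_edge P2 ({v, a}, l) < relabel_edge P1 ({v, a}, l)"
    using v(2) pos_le[OF \<open>a \<in> ?V\<close>] by (rule relabel_edge_strict_mono)
  ultimately show ?thesis
    unfolding relabeled_edges_eq
    by (intro sorted_list_of_multiset_image_less[OF finite_graph_edges[OF tp] _ edge])
qed

end
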